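(* Let $D$ be a $3$-dicritical digraph not isomorphic to $\overleftrightarrow{K_3}$ or to $\vec{W_3}$, and let $T$ be a tree such that the bidirected tree $\overleftrightarrow{T}$ (obtained from $T$ by replacing each edge by a digon) is a subdigraph of $D$. Then the number of unordered pairs $\{u,v\}$ of distinct vertices of $T$ such that neither $uv$ nor $vu$ is an arc of $D$ is at least $\mathrm{dearth}(T)$.
   Context: Digraphs are finite, without loops or parallel arcs; a digon is a pair of arcs $uv,vu$. A $2$-dicolouring is a map to $\{1,2\}$ whose colour classes induce acyclic subdigraphs. $D$ is $3$-dicritical if $D$ has no $2$-dicolouring but every proper subdigraph has one. $\overleftrightarrow{K_3}$ has 3 vertices and all 6 arcs; $\vec{W_3}$ is a directed triangle $a\to b\to c\to a$ plus a vertex $r$ joined by a digon to each of $a,b,c$. For a tree $T$, $V_3(T)$ is the set of vertices of degree at least 3, an odd pair is a pair of non-adjacent vertices of $T$ at odd distance in $T$, $\mathrm{op}(T)$ is the number of odd pairs, and $\mathrm{dearth}(T)=\sum_{v\in V_3(T)}\frac16 d_T(v)(d_T(v)-1)+\mathrm{op}(T)$. *)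

theory Defs
  imports Complex_Main
begin

text \<open>A digraph is a pair (V, A) of a finite vertex set and an arc relation
  A \<subseteq> V \<times> V without loops; parallel arcs are excluded by the set representation.\<close>

definition digraph :: "'a set \<Rightarrow> ('a \<times> 'a) set \<Rightarrow> bool" where
  "digraph V A \<longleftrightarrow> finite V \<and> A \<subseteq> V \<times> V \<and> (\<forall>v. (v, v) \<notin> A)"

definition subdigraph :: "'a set \<Rightarrow> ('a \<times> 'a) set \<Rightarrow> 'a set \<Rightarrow> ('a \<times> 'a) set \<Rightarrow> bool" where
  "subdigraph V' A' V A \<longleftrightarrow> V' \<subseteq> V \<and> A' \<subseteq> A \<and> A' \<subseteq> V' \<times> V'"

definition proper_subdigraph :: "'a set \<Rightarrow> ('a \<times> 'a) set \<Rightarrow> 'a set \<Rightarrow> ('a \<times> 'a) set \<Rightarrow> bool" where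
  "proper_subdigraph V' A' V A \<longleftrightarrow> subdigraph V' A' V A \<and> (V', A') \<noteq> (V, A)"

definition two_dicolouring :: "'a set \<Rightarrow> ('a \<times> 'a) set \<Rightarrow> ('a \<Rightarrow> nat) \<Rightarrow> bool" where
  "two_dicolouring V A c \<longleftrightarrow> (\<forall>v\<in>V. c v \<in> {1, 2}) \<and>
     (\<forall>i\<in>{1::nat, 2}. acyclic (A \<inter> ({v\<in>V. c v = i} \<times> {v\<in>V. c v = i})))"

definition two_dicolourable :: "'a set \<Rightarrow> ('a \<times> 'a) set \<Rightarrow> bool" where
  "two_dicolourable V A \<longleftrightarrow> (\<exists>c. two_dicolouring V A c)"

definition three_dicritical :: "'a set \<Rightarrow> ('a \<times> 'a) set \<Rightarrow> bool" where
  "three_dicritical V A \<longleftrightarrow> digraph V A \<and> \<not> two_dicolourable V A \<and>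
     (\<forall>V' A'. proper_subdigraph V' A' V A \<longrightarrow> two_dicolourable V' A')"

definition iso_digraph :: "'a set \<Rightarrow> ('a \<times> 'a) set \<Rightarrow> 'b set \<Rightarrow> ('b \<times> 'b) set \<Rightarrow> bool" where
  "iso_digraph V A V' A' \<longleftrightarrow> (\<exists>f. bij_betw f V V' \<and>
     (\<forall>u\<in>V. \<forall>v\<in>V. (u, v) \<in> A \<longleftrightarrow> (f u, f v) \<in> A'))"

definition K3_verts :: "nat set" where "K3_verts = {0, 1, 2}"
definition K3_arcs :: "(nat \<times> nat) set" where
  "K3_arcs = {(i, j). i \<in> K3_verts \<and> j \<in> K3_verts \<and> i \<noteq> j}"

text \<open>W3: directed triangle 0 \<rightarrow> 1 \<rightarrow> 2 \<rightarrow> 0 plus vertex 3 joined by a digon to each of 0,1,2.\<close>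
definition W3_verts :: "nat set" where "W3_verts = {0, 1, 2, 3}"
definition W3_arcs :: "(nat \<times> nat) set" where
  "W3_arcs = {(0, 1), (1, 2), (2, 0), (3, 0), (0, 3), (3, 1), (1, 3), (3, 2), (2, 3)}"

definition ugraph :: "'a set \<Rightarrow> ('a \<times> 'a) set \<Rightarrow> bool" where
  "ugraph VT E \<longleftrightarrow> finite VT \<and> E \<subseteq> VT \<times> VT \<and> sym E \<and> (\<forall>v. (v, v) \<notin> E)"

definition connected_ug :: "'a set \<Rightarrow> ('a \<times> 'a) set \<Rightarrow> bool" where
  "connected_ug VT E \<longleftrightarrow> (\<forall>u\<in>VT. \<forall>v\<in>VT. (u, v) \<in> E\<^sup>*)"

definition has_cycle :: "('a \<times> 'a) set \<Rightarrow> bool" where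
  "has_cycle E \<longleftrightarrow> (\<exists>xs. length xs \<ge> 3 \<and> distinct xs \<and>
     (\<forall>i. Suc i < length xs \<longrightarrow> (xs ! i, xs ! Suc i) \<in> E) \<and> (last xs, hd xs) \<in> E)"

definition tree :: "'a set \<Rightarrow> ('a \<times> 'a) set \<Rightarrow> bool" where
  "tree VT E \<longleftrightarrow> ugraph VT E \<and> VT \<noteq> {} \<and> connected_ug VT E \<and> \<not> has_cycle E"

definition deg :: "('a \<times> 'a) set \<Rightarrow> 'a \<Rightarrow> nat" where
  "deg E v = card {u. (v, u) \<in> E}"

definition V3 :: "'a set \<Rightarrow> ('a \<times> 'a) set \<Rightarrow> 'a set" where
  "V3 VT E = {v \<in> VT. deg E v \<ge> 3}"

definition gdist :: "('a \<times> 'a) set \<Rightarrow> 'a \<Rightarrow> 'a \<Rightarrow> nat" where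
  "gdist E u v = (LEAST n. (u, v) \<in> E ^^ n)"

definition odd_pairs :: "'a set \<Rightarrow> ('a \<times> 'a) set \<Rightarrow> 'a set set" where
  "odd_pairs VT E = {{u, v} | u v. u \<in> VT \<and> v \<in> VT \<and> u \<noteq> v \<and> (u, v) \<notin> E \<and> odd (gdist E u v)}"

definition op_count :: "'a set \<Rightarrow> ('a \<times> 'a) set \<Rightarrow> nat" where
  "op_count VT E = card (odd_pairs VT E)"

definition dearth :: "'a set \<Rightarrow> ('a \<times> 'a) set \<Rightarrow> real" where
  "dearth VT E = (\<Sum>v\<in>V3 VT E. real (deg E v) * (real (deg E v) - 1) / 6) + real (op_count VT E)"

definition missing_pairs :: "('a \<times> 'a) set \<Rightarrow> 'a set \<Rightarrow> 'a set set" where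
  "missing_pairs A VT = {{u, v} | u v. u \<in> VT \<and> v \<in> VT \<and> u \<noteq> v \<and> (u, v) \<notin> A \<and> (v, u) \<notin> A}"

end

theory Submission
  imports Defs
begin

text \<open>Two kinds of missing pairs are counted separately. A pair at odd distance in T
  spans no arc of D: deleting such an arc ab, criticality gives a 2-dicolouring of D - ab
  that colours a and b alike, while the digons of the bidirected tree force the colours to
  alternate along T. The T-neighbours of a vertex v are all joined to v by digons, so
  criticality and the exclusion of W3 leave no triangle among them in the underlying graph
  of D, and Mantel's theorem yields at least d(d - 1)/6 missing pairs among them when
  d \<ge> 3. These families of pairs are disjoint: a pair of neighbours of v is at distance 2
  in T, and two vertices of a tree have at most one common neighbour.\<close>

definition non_edges :: "('a \<times> 'a) set \<Rightarrow> 'a set \<Rightarrow> 'a set set" where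
  "non_edges R S = {{x, y} | x y. x \<in> S \<and> y \<in> S \<and> x \<noteq> y \<and> (x, y) \<notin> R}"

definition triangle_free :: "('a \<times> 'a) set \<Rightarrow> 'a set \<Rightarrow> bool" where
  "triangle_free R S \<longleftrightarrow> (\<forall>x\<in>S. \<forall>y\<in>S. \<forall>z\<in>S.
     (x, y) \<in> R \<longrightarrow> (y, z) \<in> R \<longrightarrow> (x, z) \<in> R \<longrightarrow> x = y \<or> y = z \<or> x = z)"

lemma non_edgesI: "x \<in> S \<Longrightarrow> y \<in> S \<Longrightarrow> x \<noteq> y \<Longrightarrow> (x, y) \<notin> R \<Longrightarrow> {x, y} \<in> non_edges R S"
  unfolding non_edges_def by blast

lemma finite_non_edges: "finite S \<Longrightarrow> finite (non_edges R S)"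
  by (rule finite_subset[of _ "Pow S"]) (auto simp: non_edges_def)

lemma non_edges_mono: "S' \<subseteq> S \<Longrightarrow> non_edges R S' \<subseteq> non_edges R S"
  unfolding non_edges_def by blast

lemma missing_pairs_eq_non_edges: "missing_pairs A VT = non_edges (A \<union> A\<inverse>) VT"
  unfolding missing_pairs_def non_edges_def by blast

text \<open>Mantel's theorem, counted by non-edges: removing the ends of an edge xy
  loses at least one non-edge per remaining vertex, since no vertex is adjacent to both.\<close>

lemma mantel_non_edges:
  assumes "finite S" "sym R" "triangle_free R S"
  shows "card S * (card S - 2) \<le> 4 * card (non_edges R S)"
  using assms
proof (induction "card S" arbitrary: S rule: less_induct)
  case less
  show ?case
  proof (cases "card S \<le> 1")
    case True
    then show ?thesis by simp
  next
    case False
    then obtain a b where ab: "a \<in> S" "b \<in> S" "a \<noteq> b"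
      by (metis One_nat_def card_le_Suc0_iff_eq less.prems(1))
    obtain x y where xy: "x \<in> S" "y \<in> S" "x \<noteq> y"
      and no_common: "\<forall>w\<in>S - {x, y}. (w, x) \<notin> R \<or> (w, y) \<notin> R"
    proof (cases "\<exists>x\<in>S. \<exists>y\<in>S. x \<noteq> y \<and> (x, y) \<in> R")
      case True
      then obtain x y where "x \<in> S" "y \<in> S" "x \<noteq> y" "(x, y) \<in> R" by blast
      with less.prems(2,3) show ?thesis
        by (intro that[of x y]) (auto simp: triangle_free_def dest: symD)
    next
      case False
      with ab show ?thesis by (intro that[of a b]) (auto dest: symD)
    qed
    define S' where "S' = S - {x, y}"
    have card_S': "card S' = card S - 2"
      using xy less.prems(1) by (simp add: S'_def card_Diff_subset)
    have IH: "card S' * (card S' - 2) \<le> 4 * card (non_edges R S')"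
      using less.prems False card_S' by (intro less.hyps) (auto simp: S'_def triangle_free_def)
    define g where "g w = (if (w, x) \<notin> R then {w, x} else {w, y})" for w
    have "inj_on g S'"
      unfolding inj_on_def g_def S'_def using xy by (auto simp: doubleton_eq_iff)
    moreover have "non_edges R S' \<inter> g ` S' = {}"
      unfolding non_edges_def g_def S'_def by (auto simp: doubleton_eq_iff)
    ultimately have "card (non_edges R S') + card S' = card (non_edges R S' \<union> g ` S')"
      using less.prems(1) by (simp add: S'_def card_Un_disjoint card_image finite_non_edges)
    also have "\<dots> \<le> card (non_edges R S)"
    proof (intro card_mono finite_non_edges less.prems(1) Un_least)
      show "non_edges R S' \<subseteq> non_edges R S" by (rule non_edges_mono) (auto simp: S'_def)
      show "g ` S' \<subseteq> non_edges R S"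
        using no_common xy unfolding g_def S'_def non_edges_def by force
    qed
    finally have gained: "card (non_edges R S') + card S' \<le> card (non_edges R S)" .
    have "card S * (card S - 2) \<le> card S' * (card S' - 2) + 4 * card S'"
    proof -
      have "card S = card S' + 2" using card_S' False by simp
      moreover consider "card S' = 0" | "card S' = 1" | j where "card S' = j + 2"
        by (metis One_nat_def add_2_eq_Suc' not0_implies_Suc)
      ultimately show ?thesis by cases (auto simp: algebra_simps)
    qed
    with IH gained show ?thesis by linarith
  qed
qed

lemma triangle_free_non_edges_ge:
  assumes "finite S" "sym R" "triangle_free R S" "3 \<le> card S"
  shows "real (card S) * (real (card S) - 1) / 6 \<le> real (card (non_edges R S))"
proof -
  define n where "n = card S"
  define m where "m = card (non_edges R S)"
  have "real (n * (n - 2)) \<le> real (4 * m)"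
    using mantel_non_edges[OF assms(1-3)] unfolding n_def m_def by linarith
  then have mantel: "real n * (real n - 2) \<le> 4 * real m"
    using assms(4) by (simp add: n_def)
  show ?thesis
  proof (cases "n = 3")
    \<comment> \<open>Here n(n - 1)/6 exceeds the Mantel bound n(n - 2)/4; integrality of m closes the gap.\<close>
    case True
    then have "1 \<le> m" using mantel by simp
    then show ?thesis using True unfolding m_def n_def by simp
  next
    case False
    then have "4 \<le> real n" using assms(4) unfolding n_def by simp
    then have "real n * (real n - 1) / 6 \<le> real n * (real n - 2) / 4"
      by (simp add: field_simps)
    then show ?thesis using mantel unfolding m_def n_def by simp
  qed
qed

lemma two_dicolouring_acyclic_class:
  assumes "two_dicolouring V A c" "p \<in> V"
  shows "acyclic (A \<inter> ({v \<in> V. c v = c p} \<times> {v \<in> V. c v = c p}))"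
proof -
  have "c p \<in> {1, 2}" using assms unfolding two_dicolouring_def by blast
  then show ?thesis using assms(1) unfolding two_dicolouring_def by blast
qed

lemma two_dicolouring_digon:
  assumes "two_dicolouring V A c" "p \<in> V" "q \<in> V" "(p, q) \<in> A" "(q, p) \<in> A"
  shows "c p \<noteq> c q"
proof
  assume "c p = c q"
  define R where "R = A \<inter> ({v \<in> V. c v = c p} \<times> {v \<in> V. c v = c p})"
  have "(p, q) \<in> R" "(q, p) \<in> R" using assms \<open>c p = c q\<close> unfolding R_def by auto
  then have "(p, p) \<in> R\<^sup>+" by (meson r_into_trancl' trancl_into_trancl)
  with two_dicolouring_acyclic_class[OF assms(1,2)] show False
    unfolding acyclic_def R_def by blast
qed

lemma three_dicritical_loopless: "three_dicritical V A \<Longrightarrow> (u, u) \<notin> A"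
  unfolding three_dicritical_def digraph_def by blast

lemma three_dicritical_arcs_subset: "three_dicritical V A \<Longrightarrow> A \<subseteq> V \<times> V"
  unfolding three_dicritical_def digraph_def by blast

lemma three_dicritical_subdigraph_eq:
  assumes "three_dicritical V A" "subdigraph V' A' V A" "\<not> two_dicolourable V' A'"
  shows "V' = V \<and> A' = A"
  using assms unfolding three_dicritical_def proper_subdigraph_def by blast

lemma three_dicritical_arc_deletion:
  assumes crit: "three_dicritical V A" and ab: "(a, b) \<in> A"
  obtains c where "two_dicolouring V (A - {(a, b)}) c" "c a = c b"
    "(b, a) \<in> ((A - {(a, b)}) \<inter> ({v \<in> V. c v = c a} \<times> {v \<in> V. c v = c a}))\<^sup>*"
proof -
  have "proper_subdigraph V (A - {(a, b)}) V A"
    using ab three_dicritical_arcs_subset[OF crit]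
    unfolding proper_subdigraph_def subdigraph_def by auto
  then obtain c where c: "two_dicolouring V (A - {(a, b)}) c"
    using crit unfolding three_dicritical_def two_dicolourable_def by blast
  define C where "C i = {v \<in> V. c v = i}" for i
  have "\<not> two_dicolouring V A c"
    using crit unfolding three_dicritical_def two_dicolourable_def by blast
  then obtain i where i: "i \<in> {1, 2}" "\<not> acyclic (A \<inter> (C i \<times> C i))"
    using c unfolding two_dicolouring_def C_def by blast
  have acyclic_del: "acyclic ((A - {(a, b)}) \<inter> (C i \<times> C i))"
    using c i(1) unfolding two_dicolouring_def C_def by blast
  have "(a, b) \<in> C i \<times> C i"
  proof (rule ccontr)
    assume "(a, b) \<notin> C i \<times> C i"
    then have "A \<inter> (C i \<times> C i) = (A - {(a, b)}) \<inter> (C i \<times> C i)" by blast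
    with i(2) acyclic_del show False by simp
  qed
  then have "A \<inter> (C i \<times> C i) = insert (a, b) ((A - {(a, b)}) \<inter> (C i \<times> C i))"
    using ab by blast
  with i(2) acyclic_del have "(b, a) \<in> ((A - {(a, b)}) \<inter> (C i \<times> C i))\<^sup>*" by simp
  with \<open>(a, b) \<in> C i \<times> C i\<close> show ?thesis
    using that[OF c] unfolding C_def by auto
qed

lemma three_dicritical_wheel_iso_W3:
  assumes crit: "three_dicritical V A"
    and spokes: "(v, x) \<in> A" "(x, v) \<in> A" "(v, y) \<in> A" "(y, v) \<in> A" "(v, z) \<in> A" "(z, v) \<in> A"
    and rim: "(x, y) \<in> A" "(y, z) \<in> A" "(z, x) \<in> A"
  shows "iso_digraph V A W3_verts W3_arcs"
proof -
  have distinct: "v \<noteq> x" "v \<noteq> y" "v \<noteq> z" "x \<noteq> y" "y \<noteq> z" "z \<noteq> x"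
    using spokes rim three_dicritical_loopless[OF crit] by metis+
  define V' where "V' = {v, x, y, z}"
  define A' where "A' = {(v, x), (x, v), (v, y), (y, v), (v, z), (z, v), (x, y), (y, z), (z, x)}"
  have "\<not> two_dicolourable V' A'"
  proof
    assume "two_dicolourable V' A'"
    then obtain c where c: "two_dicolouring V' A' c" unfolding two_dicolourable_def by blast
    have "c v \<noteq> c x" "c v \<noteq> c y" "c v \<noteq> c z"
      by (rule two_dicolouring_digon[OF c]; simp add: V'_def A'_def)+
    moreover have "c v \<in> {1, 2}" "c x \<in> {1, 2}" "c y \<in> {1, 2}" "c z \<in> {1, 2}"
      using c unfolding two_dicolouring_def V'_def by auto
    ultimately have "c y = c x" "c z = c x" by auto
    define R where "R = A' \<inter> ({u \<in> V'. c u = c x} \<times> {u \<in> V'. c u = c x})"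
    have "(x, y) \<in> R" "(y, z) \<in> R" "(z, x) \<in> R"
      using \<open>c y = c x\<close> \<open>c z = c x\<close> unfolding R_def V'_def A'_def by auto
    then have "(x, x) \<in> R\<^sup>+" by (meson r_into_trancl' trancl_into_trancl)
    with two_dicolouring_acyclic_class[OF c, of x] show False
      unfolding acyclic_def R_def V'_def by blast
  qed
  moreover have "subdigraph V' A' V A"
    using spokes rim three_dicritical_arcs_subset[OF crit]
    unfolding subdigraph_def V'_def A'_def by blast
  ultimately have "V' = V" "A' = A"
    using three_dicritical_subdigraph_eq[OF crit] by blast+
  define f :: "'a \<Rightarrow> nat"
    where "f u = (if u = x then 0 else if u = y then 1 else if u = z then 2 else 3)" for u
  have f: "f v = 3" "f x = 0" "f y = 1" "f z = 2"
    unfolding f_def using distinct by auto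
  have "bij_betw f V' W3_verts"
    unfolding bij_betw_def inj_on_def V'_def W3_verts_def f_def using distinct by auto
  moreover have "\<forall>u\<in>V'. \<forall>w\<in>V'. (u, w) \<in> A' \<longleftrightarrow> (f u, f w) \<in> W3_arcs"
    unfolding V'_def A'_def W3_arcs_def using distinct distinct[symmetric] by (simp add: f)
  ultimately show ?thesis
    unfolding iso_digraph_def \<open>V' = V\<close> \<open>A' = A\<close> by blast
qed

lemma three_dicritical_no_transitive_triangle_at_digons:
  assumes crit: "three_dicritical V A"
    and spokes: "(v, p) \<in> A" "(p, v) \<in> A" "(v, q) \<in> A" "(q, v) \<in> A" "(v, r) \<in> A"
    and triangle: "(p, q) \<in> A" "(q, r) \<in> A" "(p, r) \<in> A"
  shows False
proof -
  obtain c where c: "two_dicolouring V (A - {(p, r)}) c" and "c p = c r"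
    and return_path: "(r, p) \<in> ((A - {(p, r)}) \<inter> ({u \<in> V. c u = c p} \<times> {u \<in> V. c u = c p}))\<^sup>*"
    using three_dicritical_arc_deletion[OF crit triangle(3)] by blast
  have in_V: "v \<in> V" "p \<in> V" "q \<in> V" "r \<in> V"
    using spokes triangle three_dicritical_arcs_subset[OF crit] by blast+
  have "v \<noteq> p" "v \<noteq> r" using spokes three_dicritical_loopless[OF crit] by metis+
  have "c v \<noteq> c p"
    by (rule two_dicolouring_digon[OF c in_V(1,2)]) (use spokes \<open>v \<noteq> p\<close> \<open>v \<noteq> r\<close> in auto)
  moreover have "c v \<noteq> c q"
    by (rule two_dicolouring_digon[OF c in_V(1,3)]) (use spokes \<open>v \<noteq> p\<close> \<open>v \<noteq> r\<close> in auto)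
  moreover have "c v \<in> {1, 2}" "c p \<in> {1, 2}" "c q \<in> {1, 2}"
    using c in_V unfolding two_dicolouring_def by auto
  ultimately have "c q = c p" by auto
  define R where "R = (A - {(p, r)}) \<inter> ({u \<in> V. c u = c p} \<times> {u \<in> V. c u = c p})"
  have "(p, q) \<in> R" "(q, r) \<in> R"
    using triangle in_V \<open>c q = c p\<close> \<open>c p = c r\<close> three_dicritical_loopless[OF crit]
    unfolding R_def by auto
  then have "(p, p) \<in> R\<^sup>+"
    using return_path unfolding R_def[symmetric]
    by (meson r_into_trancl' trancl_into_trancl trancl_rtrancl_trancl)
  with two_dicolouring_acyclic_class[OF c in_V(2)] show False
    unfolding acyclic_def R_def by blast
qed

lemma three_dicritical_digon_neighbourhood_triangle_free:
  assumes crit: "three_dicritical V A"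
    and not_W3: "\<not> iso_digraph V A W3_verts W3_arcs"
    and digons: "\<forall>u\<in>S. (v, u) \<in> A \<and> (u, v) \<in> A"
  shows "triangle_free (A \<union> A\<inverse>) S"
  unfolding triangle_free_def
proof (intro ballI impI)
  fix x y z assume "x \<in> S" "y \<in> S" "z \<in> S"
    and adjacent: "(x, y) \<in> A \<union> A\<inverse>" "(y, z) \<in> A \<union> A\<inverse>" "(x, z) \<in> A \<union> A\<inverse>"
  have no_cyclic: "\<not> ((p, q) \<in> A \<and> (q, r) \<in> A \<and> (r, p) \<in> A)"
    if "p \<in> S" "q \<in> S" "r \<in> S" for p q r
    using three_dicritical_wheel_iso_W3[OF crit, of v p q r] not_W3 digons that by blast
  have no_transitive: "\<not> ((p, q) \<in> A \<and> (q, r) \<in> A \<and> (p, r) \<in> A)"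
    if "p \<in> S" "q \<in> S" "r \<in> S" for p q r
    using three_dicritical_no_transitive_triangle_at_digons[OF crit, of v p q r] digons that by blast
  have False
    using adjacent no_cyclic[of x y z] no_cyclic[of x z y]
      no_transitive[of x y z] no_transitive[of x z y] no_transitive[of y x z]
      no_transitive[of y z x] no_transitive[of z x y] no_transitive[of z y x]
      \<open>x \<in> S\<close> \<open>y \<in> S\<close> \<open>z \<in> S\<close>
    by blast
  then show "x = y \<or> y = z \<or> x = z" ..
qed

lemma card_Un_disjoint_family_le:
  assumes "finite B" "finite I" "X \<subseteq> B" "\<And>i. i \<in> I \<Longrightarrow> F i \<subseteq> B"
    and "\<And>i j. i \<in> I \<Longrightarrow> j \<in> I \<Longrightarrow> i \<noteq> j \<Longrightarrow> F i \<inter> F j = {}"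
    and "\<And>i. i \<in> I \<Longrightarrow> F i \<inter> X = {}"
  shows "card X + (\<Sum>i\<in>I. card (F i)) \<le> card B"
proof -
  have finite_F: "finite (F i)" if "i \<in> I" for i
    using assms(1,4) that finite_subset by blast
  have UN: "card (\<Union>i\<in>I. F i) = (\<Sum>i\<in>I. card (F i))"
    by (rule card_UN_disjoint[OF assms(2)]) (use finite_F assms(5) in blast)+
  have "X \<inter> (\<Union>i\<in>I. F i) = {}" using assms(6) by blast
  then have "card X + card (\<Union>i\<in>I. F i) = card (X \<union> (\<Union>i\<in>I. F i))"
    using assms(1-3) finite_F by (intro card_Un_disjoint[symmetric]) (auto intro: finite_subset)
  also have "\<dots> \<le> card B"
    using assms(3,4) by (intro card_mono[OF assms(1)]) blast
  finally show ?thesis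
    unfolding UN .
qed

lemma relpow_two_colouring_parity:
  assumes "E \<subseteq> S \<times> S" "c ` S \<subseteq> {\<alpha>, \<beta>}" "\<And>p q. (p, q) \<in> E \<Longrightarrow> c p \<noteq> c q"
    and "p \<in> S" "q \<in> S" "(p, q) \<in> E ^^ n"
  shows "c p = c q \<longleftrightarrow> even n"
  using assms(5,6)
proof (induction n arbitrary: q)
  case 0
  then show ?case by simp
next
  case (Suc n)
  obtain r where r: "(p, r) \<in> E ^^ n" "(r, q) \<in> E"
    using Suc.prems(2) by (rule relpow_Suc_E)
  have "r \<in> S" using r(2) assms(1) by blast
  have "c p = c r \<longleftrightarrow> even n" by (rule Suc.IH[OF \<open>r \<in> S\<close> r(1)])
  moreover have "c r \<noteq> c q" by (rule assms(3)[OF r(2)])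
  moreover have "c p \<in> {\<alpha>, \<beta>}" "c q \<in> {\<alpha>, \<beta>}" "c r \<in> {\<alpha>, \<beta>}"
    using assms(2) assms(4) Suc.prems(1) \<open>r \<in> S\<close> by auto
  ultimately show ?case unfolding even_Suc by (metis insertE singletonD)
qed

lemma three_dicritical_adjacent_even_walk:
  assumes crit: "three_dicritical V A" and sub: "subdigraph VT E V A" and "sym E"
    and adjacent: "(a, b) \<in> A \<union> A\<inverse>" "(a, b) \<notin> E"
    and "a \<in> VT" "b \<in> VT" "(a, b) \<in> E ^^ n"
  shows "even n"
proof -
  obtain a' b' where arc: "(a', b') \<in> A" and ends: "{a', b'} = {a, b}"
    using adjacent(1) by blast
  obtain c where c: "two_dicolouring V (A - {(a', b')}) c" and "c a' = c b'"
    using three_dicritical_arc_deletion[OF crit arc] by blast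
  then have "c a = c b" using ends by (auto simp: doubleton_eq_iff)
  have E_sym: "(q, p) \<in> E" if "(p, q) \<in> E" for p q
    using \<open>sym E\<close> that by (rule symD)
  have not_tree_edge: "(a', b') \<notin> E" "(b', a') \<notin> E"
    using ends adjacent(2) E_sym by (auto simp: doubleton_eq_iff)
  have proper: "c p \<noteq> c q" if "(p, q) \<in> E" for p q
  proof (rule two_dicolouring_digon[OF c])
    show "p \<in> V" "q \<in> V" using that sub unfolding subdigraph_def by blast+
    show "(p, q) \<in> A - {(a', b')}" "(q, p) \<in> A - {(a', b')}"
      using that E_sym[OF that] not_tree_edge sub unfolding subdigraph_def by blast+
  qed
  have colours: "c ` VT \<subseteq> {1, 2}"
    using c sub unfolding two_dicolouring_def subdigraph_def by blast
  have "E \<subseteq> VT \<times> VT" using sub unfolding subdigraph_def by blast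
  from relpow_two_colouring_parity[OF this colours proper assms(6-8)]
  have "c a = c b \<longleftrightarrow> even n" .
  with \<open>c a = c b\<close> show ?thesis by blast
qed

lemma gdist_relpow: "(u, w) \<in> E\<^sup>* \<Longrightarrow> (u, w) \<in> E ^^ gdist E u w"
  unfolding gdist_def rtrancl_power by (rule LeastI_ex)

lemma gdist_eq_2:
  assumes "(x, v) \<in> E" "(v, y) \<in> E" "x \<noteq> y" "(x, y) \<notin> E"
  shows "gdist E x y = 2"
  unfolding gdist_def
proof (rule Least_equality)
  show "(x, y) \<in> E ^^ 2"
    using assms(1,2) by (auto simp: numeral_2_eq_2 relcomp.relcompI)
  show "2 \<le> m" if "(x, y) \<in> E ^^ m" for m
  proof (rule ccontr)
    assume "\<not> 2 \<le> m"
    then have "m = 0 \<or> m = 1" by auto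
    then show False using that assms(3,4) by auto
  qed
qed

lemma odd_pairs_subset_non_edges:
  assumes crit: "three_dicritical V A" and "tree VT E" "subdigraph VT E V A"
  shows "odd_pairs VT E \<subseteq> non_edges (A \<union> A\<inverse>) VT"
proof
  fix P assume "P \<in> odd_pairs VT E"
  then obtain u w where P: "P = {u, w}" "u \<in> VT" "w \<in> VT" "u \<noteq> w" "(u, w) \<notin> E"
    and odd: "odd (gdist E u w)"
    unfolding odd_pairs_def by blast
  have "sym E" using \<open>tree VT E\<close> unfolding tree_def ugraph_def by blast
  have "(u, w) \<in> E\<^sup>*" using \<open>tree VT E\<close> P unfolding tree_def connected_ug_def by blast
  then have walk: "(u, w) \<in> E ^^ gdist E u w" by (rule gdist_relpow)
  have "(u, w) \<notin> A \<union> A\<inverse>"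
  proof
    assume "(u, w) \<in> A \<union> A\<inverse>"
    from three_dicritical_adjacent_even_walk[OF crit \<open>subdigraph VT E V A\<close> \<open>sym E\<close> this P(5,2,3) walk]
    show False using odd by blast
  qed
  with P show "P \<in> non_edges (A \<union> A\<inverse>) VT" by (simp add: non_edgesI)
qed

lemma tree_common_neighbour_unique:
  assumes "tree VT E" "x \<noteq> y" "(v, x) \<in> E" "(v, y) \<in> E" "(v', x) \<in> E" "(v', y) \<in> E"
  shows "v = v'"
proof (rule ccontr)
  assume "v \<noteq> v'"
  have "sym E" and loop_free: "\<And>u. (u, u) \<notin> E" and "\<not> has_cycle E"
    using assms(1) unfolding tree_def ugraph_def by blast+
  have edges: "(x, v) \<in> E" "(v, y) \<in> E" "(y, v') \<in> E" "(v', x) \<in> E"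
    using assms(3-6) \<open>sym E\<close> by (auto intro: symD)
  have "x \<noteq> v" "x \<noteq> v'" "y \<noteq> v" "y \<noteq> v'"
    using edges loop_free by blast+
  have "has_cycle E"
    unfolding has_cycle_def
  proof (intro exI conjI allI impI)
    show "distinct [x, v, y, v']"
      using \<open>v \<noteq> v'\<close> assms(2) \<open>x \<noteq> v\<close> \<open>x \<noteq> v'\<close> \<open>y \<noteq> v\<close> \<open>y \<noteq> v'\<close> by auto
    fix i assume "Suc i < length [x, v, y, v']"
    then have "i = 0 \<or> i = 1 \<or> i = 2" by auto
    then show "([x, v, y, v'] ! i, [x, v, y, v'] ! Suc i) \<in> E" using edges by auto
  qed (use edges in simp_all)
  with \<open>\<not> has_cycle E\<close> show False by blast
qed

lemma non_edges_neighbourhoods_disjoint: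
  assumes "tree VT E" "v \<noteq> v'"
  shows "non_edges R (E `` {v}) \<inter> non_edges R (E `` {v'}) = {}"
proof -
  have "v = v'" if in_v: "P \<in> non_edges R (E `` {v})" and in_v': "P \<in> non_edges R (E `` {v'})" for P
  proof -
    obtain x y where "P = {x, y}" "x \<noteq> y" "(v, x) \<in> E" "(v, y) \<in> E"
      using in_v unfolding non_edges_def by blast
    moreover have "P \<subseteq> E `` {v'}" using in_v' unfolding non_edges_def by blast
    ultimately show "v = v'" using tree_common_neighbour_unique[OF assms(1)] by blast
  qed
  with assms(2) show ?thesis by blast
qed

lemma non_edges_neighbourhood_disjoint_odd_pairs:
  assumes "sym E" "E \<subseteq> R"
  shows "non_edges R (E `` {v}) \<inter> odd_pairs VT E = {}"
proof -
  have False if in_nbhd: "P \<in> non_edges R (E `` {v})" and in_odd: "P \<in> odd_pairs VT E" for P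
  proof -
    obtain x y where P: "P = {x, y}" "x \<noteq> y" "(v, x) \<in> E" "(v, y) \<in> E" "(x, y) \<notin> R"
      using in_nbhd unfolding non_edges_def by blast
    obtain u w where "P = {u, w}" and odd: "odd (gdist E u w)"
      using in_odd unfolding odd_pairs_def by blast
    have "(x, v) \<in> E" "(y, v) \<in> E" "(x, y) \<notin> E" "(y, x) \<notin> E"
      using P assms by (auto intro: symD)
    then have "gdist E x y = 2" "gdist E y x = 2"
      using P gdist_eq_2 by metis+
    moreover have "(u, w) = (x, y) \<or> (u, w) = (y, x)"
      using P \<open>P = {u, w}\<close> by (auto simp: doubleton_eq_iff)
    ultimately show False using odd by auto
  qed
  then show ?thesis by blast
qed

lemma three_dicritical_neighbourhood_non_edges_ge:
  assumes crit: "three_dicritical V A" and not_W3: "\<not> iso_digraph V A W3_verts W3_arcs"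
    and "tree VT E" "subdigraph VT E V A" "v \<in> V3 VT E"
  shows "real (deg E v) * (real (deg E v) - 1) / 6 \<le> real (card (non_edges (A \<union> A\<inverse>) (E `` {v})))"
proof -
  have "finite VT" "sym E" "E \<subseteq> VT \<times> VT"
    using \<open>tree VT E\<close> unfolding tree_def ugraph_def by blast+
  have "E \<subseteq> A" using \<open>subdigraph VT E V A\<close> unfolding subdigraph_def by blast
  have "triangle_free (A \<union> A\<inverse>) (E `` {v})"
    using \<open>E \<subseteq> A\<close> \<open>sym E\<close>
    by (intro three_dicritical_digon_neighbourhood_triangle_free[OF crit not_W3]) (auto intro: symD)
  moreover have "finite (E `` {v})"
    using \<open>finite VT\<close> \<open>E \<subseteq> VT \<times> VT\<close> by (auto intro: finite_subset)
  moreover have "deg E v = card (E `` {v})" unfolding deg_def by (simp add: Image_singleton)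
  moreover have "sym (A \<union> A\<inverse>)" by (simp add: sym_Un_converse)
  ultimately show ?thesis
    using \<open>v \<in> V3 VT E\<close> triangle_free_non_edges_ge unfolding V3_def by auto
qed

lemma op_count_plus_neighbourhood_non_edges_le:
  assumes crit: "three_dicritical V A" and "tree VT E" "subdigraph VT E V A"
  shows "op_count VT E + (\<Sum>v\<in>V3 VT E. card (non_edges (A \<union> A\<inverse>) (E `` {v})))
    \<le> card (missing_pairs A VT)"
  unfolding op_count_def missing_pairs_eq_non_edges
proof (rule card_Un_disjoint_family_le)
  have "finite VT" "sym E" "E \<subseteq> VT \<times> VT"
    using \<open>tree VT E\<close> unfolding tree_def ugraph_def by blast+
  then show "finite (non_edges (A \<union> A\<inverse>) VT)" "finite (V3 VT E)"
    by (simp_all add: finite_non_edges V3_def)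
  show "odd_pairs VT E \<subseteq> non_edges (A \<union> A\<inverse>) VT"
    by (rule odd_pairs_subset_non_edges[OF assms])
  show "non_edges (A \<union> A\<inverse>) (E `` {v}) \<subseteq> non_edges (A \<union> A\<inverse>) VT" for v
    using \<open>E \<subseteq> VT \<times> VT\<close> by (intro non_edges_mono) blast
  show "non_edges (A \<union> A\<inverse>) (E `` {v}) \<inter> non_edges (A \<union> A\<inverse>) (E `` {v'}) = {}"
    if "v \<noteq> v'" for v v'
    using non_edges_neighbourhoods_disjoint[OF \<open>tree VT E\<close> that] .
  have "E \<subseteq> A \<union> A\<inverse>" using \<open>subdigraph VT E V A\<close> unfolding subdigraph_def by blast
  then show "non_edges (A \<union> A\<inverse>) (E `` {v}) \<inter> odd_pairs VT E = {}" for v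
    by (rule non_edges_neighbourhood_disjoint_odd_pairs[OF \<open>sym E\<close>])
qed

theorem lemma30:
  fixes V :: "'a set" and A :: "('a \<times> 'a) set" and VT :: "'a set" and E :: "('a \<times> 'a) set"
  assumes "three_dicritical V A"
    and "\<not> iso_digraph V A K3_verts K3_arcs"
    and "\<not> iso_digraph V A W3_verts W3_arcs"
    and "tree VT E"
    and "subdigraph VT E V A"
  shows "real (card (missing_pairs A VT)) \<ge> dearth VT E"
proof -
  define M where "M v = card (non_edges (A \<union> A\<inverse>) (E `` {v}))" for v
  have "(\<Sum>v\<in>V3 VT E. real (deg E v) * (real (deg E v) - 1) / 6) \<le> (\<Sum>v\<in>V3 VT E. real (M v))"
    unfolding M_def
    by (intro sum_mono three_dicritical_neighbourhood_non_edges_ge[OF assms(1,3-5)])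
  moreover have "real (op_count VT E) + (\<Sum>v\<in>V3 VT E. real (M v)) \<le> real (card (missing_pairs A VT))"
    using op_count_plus_neighbourhood_non_edges_le[OF assms(1,4,5)] unfolding M_def
    by (metis of_nat_add of_nat_le_iff of_nat_sum)
  ultimately show ?thesis unfolding dearth_def by linarith
qed

end
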